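(* If $d:\mathcal{A}\to A$ is a derivation, then $d(\mathcal{A}\cap\mathcal{K})\subseteq\mathcal{K}$.
   Context: Setup: $G$ is an infinite compact (Hausdorff) abelian group, written additively, and $x_1\in G$ generates a dense cyclic subgroup; $x_n=nx_1$. $\widehat G$ is the group of continuous characters. Let $H_+=\ell^2(\mathbb{Z}_{\ge 0})$ with canonical basis $\{E_k^+\}$; $UE_k^+=E_{k+1}^+$, $M^+_fE^+_k=f(x_k)E^+_k$. $A=C^*(U,M^+_f:f\in C(G))$, $\mathcal{A}$ is the $*$-subalgebra generated by $U,U^*,M^+_\chi$ ($\chi\in\widehat G$), and $\mathcal{K}$ is the algebra of compact operators on $H_+$. A derivation is a linear map $d:\mathcal{A}\to A$ with $d(ab)=ad(b)+d(a)b$. *)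

theory Defs
  imports "HOL-Analysis.Analysis"
begin

type_synonym vec = "nat \<Rightarrow> complex"

text \<open>Bounded operators on H+ are modelled as functions vec => vec that are linear and
  bounded on l2, map l2 into l2, and are normalised to be 0 outside l2 (so that equality
  of functions is equality of operators).\<close>
type_synonym op = "vec \<Rightarrow> vec"

definition l2 :: "vec set" where
  "l2 = {v. summable (\<lambda>k. (cmod (v k))\<^sup>2)}"

definition l2norm :: "vec \<Rightarrow> real" where
  "l2norm v = sqrt (\<Sum>k. (cmod (v k))\<^sup>2)"

definition l2inner :: "vec \<Rightarrow> vec \<Rightarrow> complex" where
  "l2inner u v = (\<Sum>k. cnj (u k) * v k)"

definition zerovec :: vec where "zerovec = (\<lambda>_. 0)"

definition bounded_op :: "op \<Rightarrow> bool" where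
  "bounded_op T \<longleftrightarrow>
     (\<forall>u\<in>l2. T u \<in> l2) \<and>
     (\<forall>u\<in>l2. \<forall>v\<in>l2. \<forall>c::complex. T (\<lambda>k. u k + c * v k) = (\<lambda>k. T u k + c * T v k)) \<and>
     (\<exists>C. \<forall>u\<in>l2. l2norm (T u) \<le> C * l2norm u) \<and>
     (\<forall>u. u \<notin> l2 \<longrightarrow> T u = zerovec)"

definition op_add :: "op \<Rightarrow> op \<Rightarrow> op" where
  "op_add S T = (\<lambda>v k. S v k + T v k)"

definition op_diff :: "op \<Rightarrow> op \<Rightarrow> op" where
  "op_diff S T = (\<lambda>v k. S v k - T v k)"

definition op_scale :: "complex \<Rightarrow> op \<Rightarrow> op" where
  "op_scale c T = (\<lambda>v k. c * T v k)"

definition op_mult :: "op \<Rightarrow> op \<Rightarrow> op" where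
  "op_mult S T = S \<circ> T"

definition opnorm :: "op \<Rightarrow> real" where
  "opnorm T = Sup {l2norm (T u) | u. u \<in> l2 \<and> l2norm u \<le> 1}"

definition adjoint :: "op \<Rightarrow> op" where
  "adjoint T = (THE S. bounded_op S \<and>
      (\<forall>u\<in>l2. \<forall>v\<in>l2. l2inner (S u) v = l2inner u (T v)))"

definition compact_op :: "op \<Rightarrow> bool" where
  "compact_op T \<longleftrightarrow> bounded_op T \<and>
     (\<forall>u::nat \<Rightarrow> vec. (\<forall>n. u n \<in> l2 \<and> l2norm (u n) \<le> 1) \<longrightarrow>
        (\<exists>r w. strict_mono r \<and> w \<in> l2 \<and>
              (\<lambda>n. l2norm (\<lambda>k. T (u (r n)) k - w k)) \<longlonglongrightarrow> 0))"

definition compact_ops :: "op set" where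
  "compact_ops = {T. compact_op T}"

definition shift :: op where
  "shift v = (if v \<in> l2 then (\<lambda>k. if k = 0 then 0 else v (k - 1)) else zerovec)"

definition mult_op :: "('g \<Rightarrow> complex) \<Rightarrow> (nat \<Rightarrow> 'g) \<Rightarrow> op" where
  "mult_op f x v = (if v \<in> l2 then (\<lambda>k. f (x k) * v k) else zerovec)"

inductive_set star_alg_gen :: "op set \<Rightarrow> op set" for S :: "op set" where
  gen: "T \<in> S \<Longrightarrow> T \<in> star_alg_gen S"
| add: "T \<in> star_alg_gen S \<Longrightarrow> T' \<in> star_alg_gen S \<Longrightarrow> op_add T T' \<in> star_alg_gen S"
| scale: "T \<in> star_alg_gen S \<Longrightarrow> op_scale c T \<in> star_alg_gen S"
| mult: "T \<in> star_alg_gen S \<Longrightarrow> T' \<in> star_alg_gen S \<Longrightarrow> op_mult T T' \<in> star_alg_gen S"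
| adj: "T \<in> star_alg_gen S \<Longrightarrow> adjoint T \<in> star_alg_gen S"

definition cstar_gen :: "op set \<Rightarrow> op set" where
  "cstar_gen S = {T. bounded_op T \<and>
      (\<forall>e>0. \<exists>a\<in>star_alg_gen S. opnorm (op_diff T a) < e)}"

definition natmul :: "nat \<Rightarrow> 'g::monoid_add \<Rightarrow> 'g" where
  "natmul n x = (((+) x) ^^ n) 0"

definition intmul :: "int \<Rightarrow> 'g::group_add \<Rightarrow> 'g" where
  "intmul k x = (if k \<ge> 0 then natmul (nat k) x else - natmul (nat (- k)) x)"

definition character :: "('g::topological_ab_group_add \<Rightarrow> complex) \<Rightarrow> bool" where
  "character chi \<longleftrightarrow> continuous_on UNIV chi \<and> (\<forall>a. cmod (chi a) = 1) \<and>
     (\<forall>a b. chi (a + b) = chi a * chi b)"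

definition alg_A :: "'g::topological_ab_group_add \<Rightarrow> op set" where
  "alg_A x1 = cstar_gen ({shift} \<union>
      {mult_op f (\<lambda>n. natmul n x1) | f :: 'g \<Rightarrow> complex. continuous_on UNIV f})"

definition alg_calA :: "'g::topological_ab_group_add \<Rightarrow> op set" where
  "alg_calA x1 = star_alg_gen ({shift, adjoint shift} \<union>
      {mult_op chi (\<lambda>n. natmul n x1) | chi :: 'g \<Rightarrow> complex. character chi})"

definition is_derivation :: "op set \<Rightarrow> op set \<Rightarrow> (op \<Rightarrow> op) \<Rightarrow> bool" where
  "is_derivation D B d \<longleftrightarrow>
     (\<forall>a\<in>D. d a \<in> B) \<and>
     (\<forall>a\<in>D. \<forall>b\<in>D. d (op_add a b) = op_add (d a) (d b)) \<and>
     (\<forall>a\<in>D. \<forall>c. d (op_scale c a) = op_scale c (d a)) \<and>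
     (\<forall>a\<in>D. \<forall>b\<in>D. d (op_mult a b) = op_add (op_mult a (d b)) (op_mult (d a) b))"

end

theory Submission
  imports Defs
begin

text \<open>Every element of the *-algebra generated by \<open>U\<close>, \<open>U\<^sup>*\<close> and the \<open>M\<^sup>+\<^sub>\<chi>\<close> is a finite
  combination of weighted shifts \<open>U\<^sup>n D\<^sub>\<lambda> U\<^sup>*\<^sup>m\<close>, where \<open>D\<^sub>\<lambda> E\<^sub>k = \<lambda>\<^sup>k E\<^sub>k\<close> and \<open>|\<lambda>| = 1\<close>
  (since \<open>\<chi>(x\<^sub>k) = \<chi>(x\<^sub>1)\<^sup>k\<close>). Far down a diagonal the matrix entries of such a
  combination form a finite exponential sum \<open>\<Sum> b\<^sub>t \<lambda>\<^sub>t\<^sup>k\<close>; if the operator is compact they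
  tend to zero, hence vanish identically. So a compact \<open>T \<in> \<A>\<close> satisfies \<open>T = P T\<close> for the
  coordinate projection \<open>P = U\<^sup>*U - U\<^sup>M U\<^sup>*\<^sup>M \<in> \<A>\<close>, and then
  \<open>d T = P d(T) + d(P) T\<close> is compact: the first term has finite rank, the second has
  a compact factor.\<close>

section \<open>Finite and exponential sums\<close>

lemma sum_list_map_eq_sum_nth: "(\<Sum>t\<leftarrow>xs. f t) = (\<Sum>i<length xs. f (xs ! i))"
  by (simp add: sum_list_sum_nth atLeast0LessThan)

lemma sum_list_map_concat: "(\<Sum>x\<leftarrow>concat xss. f x) = (\<Sum>xs\<leftarrow>xss. \<Sum>x\<leftarrow>xs. f x)"
  by (induction xss) auto

lemma norm_sum_list_squared_le:
  fixes g :: "'a \<Rightarrow> 'b::real_normed_vector"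
  shows "(norm (\<Sum>t\<leftarrow>xs. g t))\<^sup>2 \<le> real (length xs) * (\<Sum>t\<leftarrow>xs. (norm (g t))\<^sup>2)"
proof -
  have "norm (\<Sum>t\<leftarrow>xs. g t) \<le> (\<Sum>i<length xs. norm (g (xs ! i)))"
    unfolding sum_list_map_eq_sum_nth by (rule norm_sum)
  then have "(norm (\<Sum>t\<leftarrow>xs. g t))\<^sup>2 \<le> (\<Sum>i<length xs. norm (g (xs ! i)))\<^sup>2"
    by (simp add: power_mono)
  also have "\<dots> \<le> (\<Sum>i<length xs. (norm (g (xs ! i)))\<^sup>2) * card {..<length xs}"
    by (rule sum_squared_le_sum_of_squares)
  finally show ?thesis by (simp add: sum_list_map_eq_sum_nth mult.commute)
qed

lemma summable_sum_list:
  fixes f :: "'a \<Rightarrow> nat \<Rightarrow> 'b::real_normed_vector"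
  assumes "\<And>t. t \<in> set xs \<Longrightarrow> summable (f t)"
  shows "summable (\<lambda>i. \<Sum>t\<leftarrow>xs. f t i)"
  unfolding sum_list_map_eq_sum_nth by (rule summable_sum) (simp add: assms)

lemma suminf_sum_list:
  fixes f :: "'a \<Rightarrow> nat \<Rightarrow> 'b::real_normed_vector"
  assumes "\<And>t. t \<in> set xs \<Longrightarrow> summable (f t)"
  shows "(\<Sum>i. \<Sum>t\<leftarrow>xs. f t i) = (\<Sum>t\<leftarrow>xs. \<Sum>i. f t i)"
  unfolding sum_list_map_eq_sum_nth by (rule suminf_sum) (simp add: assms)

lemma unimodular_power_sum_tendsto_0_imp_coeffs_0:
  fixes S :: "complex set"
  assumes "finite S" "\<forall>\<mu>\<in>S. cmod \<mu> = 1" "(\<lambda>k. \<Sum>\<mu>\<in>S. a \<mu> * \<mu> ^ k) \<longlonglongrightarrow> 0"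
  shows "\<forall>\<mu>\<in>S. a \<mu> = 0"
  using assms
proof (induction S arbitrary: a rule: finite_induct)
  case empty then show ?case by simp
next
  case (insert \<nu> S)
  define s where "s = (\<lambda>k. \<Sum>\<mu>\<in>insert \<nu> S. a \<mu> * \<mu> ^ k)"
  have s0: "s \<longlonglongrightarrow> 0" using insert.prems by (simp add: s_def)
  \<comment> \<open>The difference \<open>s (k+1) - \<nu> s k\<close> is an exponential sum without the frequency \<open>\<nu>\<close>.\<close>
  have "s (Suc k) - \<nu> * s k = (\<Sum>\<mu>\<in>S. (a \<mu> * (\<mu> - \<nu>)) * \<mu> ^ k)" for k
    using insert.hyps
    by (simp add: s_def algebra_simps sum_distrib_left sum_subtractf[symmetric])
  moreover have "(\<lambda>k. s (Suc k) - \<nu> * s k) \<longlonglongrightarrow> 0 - \<nu> * 0"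
    by (intro tendsto_diff tendsto_mult tendsto_const LIMSEQ_Suc s0)
  ultimately have "\<forall>\<mu>\<in>S. a \<mu> * (\<mu> - \<nu>) = 0"
    using insert.IH[of "\<lambda>\<mu>. a \<mu> * (\<mu> - \<nu>)"] insert.prems by auto
  then have zS: "\<forall>\<mu>\<in>S. a \<mu> = 0" using insert.hyps(2) by auto
  then have "s = (\<lambda>k. a \<nu> * \<nu> ^ k)" using insert.hyps by (simp add: s_def fun_eq_iff)
  moreover have "norm (a \<nu> * \<nu> ^ k) = cmod (a \<nu>)" for k
    using insert.prems(1) by (simp add: norm_mult norm_power)
  ultimately have "(\<lambda>k. cmod (a \<nu>)) \<longlonglongrightarrow> 0" using tendsto_norm_zero[OF s0] by simp
  then have "a \<nu> = 0" by (simp add: LIMSEQ_const_iff)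
  then show ?case using zS by simp
qed

lemma unimodular_power_sum_list_tendsto_0_imp_0:
  fixes lam b :: "'a \<Rightarrow> complex"
  assumes "\<And>t. t \<in> set xs \<Longrightarrow> cmod (lam t) = 1"
    and lim: "(\<lambda>k. \<Sum>t\<leftarrow>xs. b t * lam t ^ k) \<longlonglongrightarrow> 0"
  shows "(\<Sum>t\<leftarrow>xs. b t * lam t ^ k) = 0"
proof -
  define I where "I = {..<length xs}"
  define g where "g = (\<lambda>i. lam (xs ! i))"
  \<comment> \<open>Terms with equal phases are merged, so that the phases become distinct.\<close>
  define A where "A = (\<lambda>y. \<Sum>i\<in>{x. x \<in> I \<and> g x = y}. b (xs ! i))"
  have eq: "(\<Sum>t\<leftarrow>xs. b t * lam t ^ k) = (\<Sum>y\<in>g ` I. A y * y ^ k)" for k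
  proof -
    have "(\<Sum>t\<leftarrow>xs. b t * lam t ^ k) = (\<Sum>i\<in>I. b (xs ! i) * g i ^ k)"
      by (simp add: sum_list_map_eq_sum_nth I_def g_def)
    also have "\<dots> = (\<Sum>y\<in>g ` I. \<Sum>i\<in>{x. x \<in> I \<and> g x = y}. b (xs ! i) * g i ^ k)"
      by (rule sum.image_gen) (simp add: I_def)
    also have "\<dots> = (\<Sum>y\<in>g ` I. A y * y ^ k)"
      by (rule sum.cong[OF refl]) (simp add: A_def sum_distrib_right)
    finally show ?thesis .
  qed
  have "\<forall>\<mu>\<in>g ` I. A \<mu> = 0"
    by (rule unimodular_power_sum_tendsto_0_imp_coeffs_0) (use assms eq in \<open>auto simp: I_def g_def\<close>)
  then show ?thesis unfolding eq by (intro sum.neutral) auto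
qed

section \<open>Square-summable sequences and bounded operators\<close>

lemma l2_iff: "v \<in> l2 \<longleftrightarrow> summable (\<lambda>k. (cmod (v k))\<^sup>2)"
  by (simp add: l2_def)

lemma zerovec_l2 [simp]: "zerovec \<in> l2"
  by (simp add: l2_def zerovec_def)

lemma l2norm_nonneg: "v \<in> l2 \<Longrightarrow> l2norm v \<ge> 0"
  unfolding l2norm_def l2_iff by (simp add: suminf_nonneg)

lemma l2norm_power2: "v \<in> l2 \<Longrightarrow> (l2norm v)\<^sup>2 = (\<Sum>k. (cmod (v k))\<^sup>2)"
  unfolding l2norm_def l2_iff by (simp add: suminf_nonneg)

lemma cmod_add_squared_le: "(cmod (a + b))\<^sup>2 \<le> 2 * (cmod a)\<^sup>2 + 2 * (cmod b)\<^sup>2"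
proof -
  have "(cmod (a + b))\<^sup>2 \<le> (cmod a + cmod b)\<^sup>2"
    by (simp add: norm_triangle_ineq power_mono)
  also have "\<dots> \<le> 2 * (cmod a)\<^sup>2 + 2 * (cmod b)\<^sup>2"
    by (smt (verit) power2_sum zero_le_power2 power2_diff)
  finally show ?thesis .
qed

lemma l2_lincomb:
  assumes "u \<in> l2" "v \<in> l2"
  shows "(\<lambda>k. u k + c * v k) \<in> l2"
    and "(\<Sum>k. (cmod (u k + c * v k))\<^sup>2)
           \<le> 2 * (\<Sum>k. (cmod (u k))\<^sup>2) + 2 * (cmod c)\<^sup>2 * (\<Sum>k. (cmod (v k))\<^sup>2)"
proof -
  have su: "summable (\<lambda>k. (cmod (u k))\<^sup>2)" and sv: "summable (\<lambda>k. (cmod (v k))\<^sup>2)"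
    using assms by (auto simp: l2_iff)
  have sg: "summable (\<lambda>k. 2 * (cmod (u k))\<^sup>2 + 2 * (cmod c)\<^sup>2 * (cmod (v k))\<^sup>2)"
    using su sv by (intro summable_add summable_mult)
  have le: "(cmod (u k + c * v k))\<^sup>2 \<le> 2 * (cmod (u k))\<^sup>2 + 2 * (cmod c)\<^sup>2 * (cmod (v k))\<^sup>2" for k
    using cmod_add_squared_le[of "u k" "c * v k"] by (simp add: norm_mult power_mult_distrib)
  have s: "summable (\<lambda>k. (cmod (u k + c * v k))\<^sup>2)"
    by (rule summable_comparison_test'[OF sg]) (use le in auto)
  then show "(\<lambda>k. u k + c * v k) \<in> l2" by (simp add: l2_iff)
  have "(\<Sum>k. (cmod (u k + c * v k))\<^sup>2)
          \<le> (\<Sum>k. 2 * (cmod (u k))\<^sup>2 + 2 * (cmod c)\<^sup>2 * (cmod (v k))\<^sup>2)"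
    by (rule suminf_le[OF le s sg])
  also have "\<dots> = 2 * (\<Sum>k. (cmod (u k))\<^sup>2) + 2 * (cmod c)\<^sup>2 * (\<Sum>k. (cmod (v k))\<^sup>2)"
    using su sv by (simp add: suminf_add[symmetric] suminf_mult summable_mult)
  finally show "(\<Sum>k. (cmod (u k + c * v k))\<^sup>2)
                  \<le> 2 * (\<Sum>k. (cmod (u k))\<^sup>2) + 2 * (cmod c)\<^sup>2 * (\<Sum>k. (cmod (v k))\<^sup>2)" .
qed

lemma l2_diff: "u \<in> l2 \<Longrightarrow> v \<in> l2 \<Longrightarrow> (\<lambda>k. u k - v k) \<in> l2"
  using l2_lincomb(1)[of u v "-1"] by simp

lemma l2norm_lincomb_le:
  assumes "u \<in> l2" "v \<in> l2"
  shows "l2norm (\<lambda>k. u k + c * v k) \<le> 2 * (l2norm u + cmod c * l2norm v)"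
proof -
  have nn: "l2norm u \<ge> 0" "l2norm v \<ge> 0" "cmod c \<ge> 0"
    using assms by (auto simp: l2norm_nonneg)
  have "(l2norm (\<lambda>k. u k + c * v k))\<^sup>2 \<le> 2 * (l2norm u)\<^sup>2 + 2 * (cmod c)\<^sup>2 * (l2norm v)\<^sup>2"
    using l2_lincomb[OF assms, of c] by (simp add: l2norm_power2 assms)
  also have "\<dots> \<le> (2 * (l2norm u + cmod c * l2norm v))\<^sup>2"
    using nn by (simp add: power2_eq_square algebra_simps)
  finally show ?thesis
    using nn by (meson power2_le_imp_le mult_nonneg_nonneg add_nonneg_nonneg zero_le_numeral)
qed

lemma cmod_le_l2norm:
  assumes "v \<in> l2" shows "cmod (v i) \<le> l2norm v"
proof -
  have "(cmod (v i))\<^sup>2 = (\<Sum>k\<in>{i}. (cmod (v k))\<^sup>2)" by simp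
  also have "\<dots> \<le> (\<Sum>k. (cmod (v k))\<^sup>2)"
    by (rule sum_le_suminf) (use assms in \<open>auto simp: l2_iff\<close>)
  finally show ?thesis
    using l2norm_power2[OF assms] l2norm_nonneg[OF assms] by (metis power2_le_imp_le)
qed

lemma l2_inner_summable:
  assumes "u \<in> l2" "v \<in> l2"
  shows "summable (\<lambda>k. cnj (u k) * v k)"
proof -
  have s: "summable (\<lambda>k. ((cmod (u k))\<^sup>2 + (cmod (v k))\<^sup>2) / 2)"
    using assms by (intro summable_divide summable_add) (auto simp: l2_iff)
  have "norm (cnj (u k) * v k) \<le> ((cmod (u k))\<^sup>2 + (cmod (v k))\<^sup>2) / 2" for k
    using zero_le_power2[of "cmod (u k) - cmod (v k)"] by (simp add: norm_mult power2_diff)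
  then show ?thesis by (intro summable_comparison_test'[OF s]) auto
qed

definition unit_vec :: "nat \<Rightarrow> vec" where
  "unit_vec j = (\<lambda>k. if k = j then 1 else 0)"

lemma unit_vec_l2: "unit_vec j \<in> l2" and l2norm_unit_vec: "l2norm (unit_vec j) = 1"
proof -
  have "(\<lambda>k. (cmod (unit_vec j k))\<^sup>2) = (\<lambda>k. if k = j then 1 else 0)"
    by (auto simp: unit_vec_def)
  moreover have "(\<lambda>k. if k = j then (1::real) else 0) sums 1"
    using sums_single[of j "\<lambda>_. 1::real"] by simp
  ultimately show "unit_vec j \<in> l2" "l2norm (unit_vec j) = 1"
    by (auto simp: l2_iff l2norm_def sums_iff)
qed

lemma l2inner_unit_vec: "l2inner w (unit_vec k) = cnj (w k)"
proof -
  have "l2inner w (unit_vec k) = (\<Sum>j. if j = k then cnj (w j) else 0)"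
    by (simp add: l2inner_def unit_vec_def if_distrib cong: if_cong)
  also have "\<dots> = cnj (w k)"
    using sums_single[of k "\<lambda>j. cnj (w j)"] by (simp add: sums_iff)
  finally show ?thesis .
qed

lemma bounded_op_l2: "bounded_op S \<Longrightarrow> S u \<in> l2"
  by (cases "u \<in> l2") (auto simp: bounded_op_def)

lemma bounded_op_lincomb:
  "bounded_op S \<Longrightarrow> u \<in> l2 \<Longrightarrow> v \<in> l2 \<Longrightarrow> S (\<lambda>k. u k + c * v k) = (\<lambda>k. S u k + c * S v k)"
  by (simp add: bounded_op_def)

lemma bounded_op_outside: "bounded_op S \<Longrightarrow> u \<notin> l2 \<Longrightarrow> S u = zerovec"
  by (simp add: bounded_op_def)

lemma bounded_op_diff:
  assumes "bounded_op S" "u \<in> l2" "v \<in> l2"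
  shows "S (\<lambda>k. u k - v k) = (\<lambda>k. S u k - S v k)"
  using bounded_op_lincomb[OF assms, of "-1"] by simp

lemma bounded_op_zerovec:
  assumes "bounded_op S" shows "S zerovec = zerovec"
  using bounded_op_diff[OF assms zerovec_l2 zerovec_l2] by (simp add: zerovec_def fun_eq_iff)

lemma bounded_op_bound:
  assumes "bounded_op S" obtains C where "C \<ge> 0" "\<And>u. u \<in> l2 \<Longrightarrow> l2norm (S u) \<le> C * l2norm u"
proof -
  obtain C where C: "\<forall>u\<in>l2. l2norm (S u) \<le> C * l2norm u"
    using assms by (auto simp: bounded_op_def)
  show ?thesis
  proof (rule that[of "max C 0"])
    fix u assume "u \<in> l2"
    moreover have "C * l2norm u \<le> max C 0 * l2norm u"
      using l2norm_nonneg[OF \<open>u \<in> l2\<close>] by (simp add: mult_right_mono)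
    ultimately show "l2norm (S u) \<le> max C 0 * l2norm u" using C by force
  qed simp
qed

lemma bounded_op_mult:
  assumes S: "bounded_op S" and T: "bounded_op T"
  shows "bounded_op (op_mult S T)"
  unfolding bounded_op_def op_mult_def o_def
proof (intro conjI ballI allI impI)
  fix u v c assume "u \<in> l2" "v \<in> l2"
  then show "S (T (\<lambda>k. u k + c * v k)) = (\<lambda>k. S (T u) k + c * S (T v) k)"
    using bounded_op_lincomb[OF T] bounded_op_lincomb[OF S bounded_op_l2[OF T] bounded_op_l2[OF T]]
    by simp
next
  obtain C1 where C1: "C1 \<ge> 0" "\<And>u. u \<in> l2 \<Longrightarrow> l2norm (S u) \<le> C1 * l2norm u"
    using bounded_op_bound[OF S] by blast
  obtain C2 where C2: "\<And>u. u \<in> l2 \<Longrightarrow> l2norm (T u) \<le> C2 * l2norm u"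
    using bounded_op_bound[OF T] by blast
  have "l2norm (S (T u)) \<le> (C1 * C2) * l2norm u" if "u \<in> l2" for u
    using C1(2)[OF bounded_op_l2[OF T, of u]] mult_left_mono[OF C2[OF that] C1(1)]
    by (metis mult.assoc order_trans)
  then show "\<exists>C. \<forall>u\<in>l2. l2norm (S (T u)) \<le> C * l2norm u" by blast
qed (use S T in \<open>auto simp: bounded_op_l2 bounded_op_outside bounded_op_zerovec\<close>)

lemma bounded_op_add:
  assumes S: "bounded_op S" and T: "bounded_op T"
  shows "bounded_op (op_add S T)"
  unfolding bounded_op_def op_add_def
proof (intro conjI ballI allI impI)
  fix u assume "u \<in> l2"
  then show "(\<lambda>k. S u k + T u k) \<in> l2"
    using l2_lincomb(1)[OF bounded_op_l2[OF S, of u] bounded_op_l2[OF T, of u], of 1] by simp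
next
  fix u v c assume "u \<in> l2" "v \<in> l2"
  then show "(\<lambda>k. S (\<lambda>k. u k + c * v k) k + T (\<lambda>k. u k + c * v k) k)
               = (\<lambda>k. S u k + T u k + c * (S v k + T v k))"
    using bounded_op_lincomb[OF T] bounded_op_lincomb[OF S] by (simp add: algebra_simps)
next
  obtain C1 where C1: "\<And>u. u \<in> l2 \<Longrightarrow> l2norm (S u) \<le> C1 * l2norm u"
    using bounded_op_bound[OF S] by blast
  obtain C2 where C2: "\<And>u. u \<in> l2 \<Longrightarrow> l2norm (T u) \<le> C2 * l2norm u"
    using bounded_op_bound[OF T] by blast
  have "l2norm (\<lambda>k. S u k + T u k) \<le> (2 * (C1 + C2)) * l2norm u" if "u \<in> l2" for u
    using l2norm_lincomb_le[OF bounded_op_l2[OF S, of u] bounded_op_l2[OF T, of u], of 1] C1[OF that] C2[OF that]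
    by (simp add: algebra_simps)
  then show "\<exists>C. \<forall>u\<in>l2. l2norm (\<lambda>k. S u k + T u k) \<le> C * l2norm u" by blast
qed (use S T in \<open>auto simp: bounded_op_outside zerovec_def\<close>)

lemma bounded_op_eqI:
  assumes "bounded_op S" "bounded_op S'"
    and "\<And>u v. u \<in> l2 \<Longrightarrow> v \<in> l2 \<Longrightarrow> l2inner (S u) v = l2inner (S' u) v"
  shows "S = S'"
proof
  fix u show "S u = S' u"
  proof (cases "u \<in> l2")
    case True
    show ?thesis
    proof
      fix k
      show "S u k = S' u k" using assms(3)[OF True unit_vec_l2] by (simp add: l2inner_unit_vec)
    qed
  qed (use assms in \<open>simp add: bounded_op_outside\<close>)
qed

section \<open>Compact operators\<close>

lemma compact_op_bounded: "compact_op T \<Longrightarrow> bounded_op T"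
  by (simp add: compact_op_def)

lemma compact_opD:
  fixes u :: "nat \<Rightarrow> vec"
  assumes "compact_op T" "\<And>n. u n \<in> l2" "\<And>n. l2norm (u n) \<le> 1"
  obtains r w where "strict_mono r" "w \<in> l2" "(\<lambda>n. l2norm (\<lambda>k. T (u (r n)) k - w k)) \<longlonglongrightarrow> 0"
  using assms unfolding compact_op_def by blast

lemma l2norm_tendsto_add:
  assumes "\<And>n. a n \<in> l2" "w \<in> l2" "(\<lambda>n. l2norm (\<lambda>k. a n k - w k)) \<longlonglongrightarrow> 0"
    and "\<And>n. b n \<in> l2" "z \<in> l2" "(\<lambda>n. l2norm (\<lambda>k. b n k - z k)) \<longlonglongrightarrow> 0"
  shows "(\<lambda>n. l2norm (\<lambda>k. (a n k + b n k) - (w k + z k))) \<longlonglongrightarrow> 0"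
proof (rule Lim_null_comparison)
  have d: "(\<lambda>k. a n k - w k) \<in> l2" "(\<lambda>k. b n k - z k) \<in> l2" for n
    using assms by (auto intro: l2_diff)
  have "norm (l2norm (\<lambda>k. (a n k + b n k) - (w k + z k)))
          \<le> 2 * (l2norm (\<lambda>k. a n k - w k) + l2norm (\<lambda>k. b n k - z k))" for n
  proof -
    have e: "(\<lambda>k. (a n k + b n k) - (w k + z k)) = (\<lambda>k. (a n k - w k) + 1 * (b n k - z k))"
      by auto
    show ?thesis
      unfolding e using l2norm_lincomb_le[OF d[of n], of 1] l2norm_nonneg[OF l2_lincomb(1)[OF d[of n], of 1]]
      by simp
  qed
  then show "\<forall>\<^sub>F n in sequentially. norm (l2norm (\<lambda>k. (a n k + b n k) - (w k + z k)))
      \<le> 2 * (l2norm (\<lambda>k. a n k - w k) + l2norm (\<lambda>k. b n k - z k))"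
    by simp
  show "(\<lambda>n. 2 * (l2norm (\<lambda>k. a n k - w k) + l2norm (\<lambda>k. b n k - z k))) \<longlonglongrightarrow> 0"
    using tendsto_mult_right_zero[OF tendsto_add_zero[OF assms(3) assms(6)], of 2] by simp
qed

lemma compact_op_add:
  assumes A: "compact_op A" and B: "compact_op B"
  shows "compact_op (op_add A B)"
  unfolding compact_op_def
proof (intro conjI allI impI)
  show "bounded_op (op_add A B)" using A B by (simp add: bounded_op_add compact_op_bounded)
  fix u :: "nat \<Rightarrow> vec" assume u: "\<forall>n. u n \<in> l2 \<and> l2norm (u n) \<le> 1"
  obtain r1 w1 where r1: "strict_mono r1" "w1 \<in> l2"
      "(\<lambda>n. l2norm (\<lambda>k. A (u (r1 n)) k - w1 k)) \<longlonglongrightarrow> 0"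
    using A u unfolding compact_op_def by blast
  obtain r2 w2 where r2: "strict_mono r2" "w2 \<in> l2"
      "(\<lambda>n. l2norm (\<lambda>k. B (u (r1 (r2 n))) k - w2 k)) \<longlonglongrightarrow> 0"
    using compact_opD[OF B, of "\<lambda>n. u (r1 n)"] u by blast
  have "(\<lambda>n. l2norm (\<lambda>k. A (u (r1 (r2 n))) k - w1 k)) \<longlonglongrightarrow> 0"
    using LIMSEQ_subseq_LIMSEQ[OF r1(3) r2(1)] by (simp add: o_def)
  then have "(\<lambda>n. l2norm (\<lambda>k. (A (u (r1 (r2 n))) k + B (u (r1 (r2 n))) k) - (w1 k + w2 k)))
               \<longlonglongrightarrow> 0"
    using r1(2) r2(2,3) A B by (intro l2norm_tendsto_add) (auto simp: bounded_op_l2 compact_op_bounded)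
  moreover have "strict_mono (r1 \<circ> r2)" using r1(1) r2(1) by (rule strict_mono_o)
  moreover have "(\<lambda>k. w1 k + w2 k) \<in> l2" using l2_lincomb(1)[OF r1(2) r2(2), of 1] by simp
  ultimately show "\<exists>r w. strict_mono r \<and> w \<in> l2 \<and>
      (\<lambda>n. l2norm (\<lambda>k. op_add A B (u (r n)) k - w k)) \<longlonglongrightarrow> 0"
    by (intro exI[of _ "r1 \<circ> r2"] exI[of _ "\<lambda>k. w1 k + w2 k"]) (simp add: op_add_def)
qed

lemma compact_op_mult_left:
  assumes S: "bounded_op S" and T: "compact_op T"
  shows "compact_op (op_mult S T)"
  unfolding compact_op_def
proof (intro conjI allI impI)
  show "bounded_op (op_mult S T)" using S T by (simp add: bounded_op_mult compact_op_bounded)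
  fix u :: "nat \<Rightarrow> vec" assume u: "\<forall>n. u n \<in> l2 \<and> l2norm (u n) \<le> 1"
  obtain r w where r: "strict_mono r" "w \<in> l2" "(\<lambda>n. l2norm (\<lambda>k. T (u (r n)) k - w k)) \<longlonglongrightarrow> 0"
    using T u unfolding compact_op_def by blast
  obtain C where C: "\<And>u. u \<in> l2 \<Longrightarrow> l2norm (S u) \<le> C * l2norm u"
    using bounded_op_bound[OF S] by blast
  have TI2: "T v \<in> l2" for v using T by (simp add: bounded_op_l2 compact_op_bounded)
  have "(\<lambda>n. l2norm (\<lambda>k. op_mult S T (u (r n)) k - S w k)) \<longlonglongrightarrow> 0"
  proof (rule Lim_null_comparison)
    have "l2norm (\<lambda>k. op_mult S T (u (r n)) k - S w k) \<le> C * l2norm (\<lambda>k. T (u (r n)) k - w k)" for n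
      using C[OF l2_diff[OF TI2 r(2)]] bounded_op_diff[OF S TI2 r(2)] by (simp add: op_mult_def)
    moreover have "l2norm (\<lambda>k. op_mult S T (u (r n)) k - S w k) \<ge> 0" for n
      using l2_diff[OF bounded_op_l2 bounded_op_l2, OF bounded_op_mult[OF S compact_op_bounded[OF T]] S]
      by (rule l2norm_nonneg)
    ultimately show "\<forall>\<^sub>F n in sequentially. norm (l2norm (\<lambda>k. op_mult S T (u (r n)) k - S w k))
        \<le> C * l2norm (\<lambda>k. T (u (r n)) k - w k)"
      by simp
    show "(\<lambda>n. C * l2norm (\<lambda>k. T (u (r n)) k - w k)) \<longlonglongrightarrow> 0"
      using tendsto_mult_right_zero[OF r(3)] by simp
  qed
  then show "\<exists>r w. strict_mono r \<and> w \<in> l2 \<and>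
      (\<lambda>n. l2norm (\<lambda>k. op_mult S T (u (r n)) k - w k)) \<longlonglongrightarrow> 0"
    using r(1) bounded_op_l2[OF S] by blast
qed

lemma bounded_coords_convergent_subseq:
  fixes f :: "nat \<Rightarrow> nat \<Rightarrow> complex"
  assumes "\<And>n k. cmod (f n k) \<le> B"
  shows "\<exists>r w. strict_mono r \<and> (\<forall>k<M. (\<lambda>n. f (r n) k) \<longlonglongrightarrow> w k)"
proof (induction M)
  case 0 show ?case using strict_mono_id by blast
next
  case (Suc M)
  then obtain r w where r: "strict_mono r" "\<forall>k<M. (\<lambda>n. f (r n) k) \<longlonglongrightarrow> w k" by blast
  have "bounded (range (\<lambda>n. f (r n) M))" using assms by (auto simp: bounded_iff)
  then obtain l s where s: "strict_mono s" "((\<lambda>n. f (r n) M) \<circ> s) \<longlonglongrightarrow> l"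
    using bounded_imp_convergent_subsequence by blast
  have "(\<lambda>n. f ((r \<circ> s) n) k) \<longlonglongrightarrow> (w(M := l)) k" if "k < Suc M" for k
  proof (cases "k = M")
    case False
    then show ?thesis
      using that LIMSEQ_subseq_LIMSEQ[OF r(2)[rule_format, of k] s(1)] by (simp add: o_def)
  qed (use s(2) in \<open>simp add: o_def\<close>)
  moreover have "strict_mono (r \<circ> s)" using r(1) s(1) by (rule strict_mono_o)
  ultimately show ?case by blast
qed

lemma compact_op_if_rows_vanish:
  assumes P: "bounded_op P" and rows: "\<And>v k. v \<in> l2 \<Longrightarrow> k \<ge> M \<Longrightarrow> P v k = 0"
  shows "compact_op P"
  unfolding compact_op_def
proof (intro conjI allI impI)
  fix u :: "nat \<Rightarrow> vec" assume u: "\<forall>n. u n \<in> l2 \<and> l2norm (u n) \<le> 1"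
  obtain C where C: "C \<ge> 0" "\<And>u. u \<in> l2 \<Longrightarrow> l2norm (P u) \<le> C * l2norm u"
    using bounded_op_bound[OF P] by blast
  have "cmod (P (u n) k) \<le> C" for n k
  proof -
    have "cmod (P (u n) k) \<le> C * l2norm (u n)"
      using cmod_le_l2norm[OF bounded_op_l2[OF P]] C(2) u by (meson order_trans)
    also have "\<dots> \<le> C" using u C(1) by (simp add: mult_left_le)
    finally show ?thesis .
  qed
  then obtain r w where r: "strict_mono r" "\<forall>k<M. (\<lambda>n. P (u (r n)) k) \<longlonglongrightarrow> w k"
    using bounded_coords_convergent_subseq[of "\<lambda>n k. P (u n) k"] by blast
  define W where "W = (\<lambda>k. if k < M then w k else 0)"
  have "W \<in> l2" unfolding l2_iff W_def by (rule summable_finite[of "{..<M}"]) auto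
  have e: "l2norm (\<lambda>k. P (u (r n)) k - W k) = sqrt (\<Sum>k<M. (cmod (P (u (r n)) k - w k))\<^sup>2)" for n
  proof -
    have "(\<Sum>k. (cmod (P (u (r n)) k - W k))\<^sup>2)
            = (\<Sum>k. if k < M then (cmod (P (u (r n)) k - w k))\<^sup>2 else 0)"
      by (rule arg_cong[where f = suminf]) (use rows u in \<open>auto simp: W_def\<close>)
    also have "\<dots> = (\<Sum>k<M. (cmod (P (u (r n)) k - w k))\<^sup>2)"
      by (subst suminf_finite[of "{..<M}"]) auto
    finally show ?thesis by (simp add: l2norm_def)
  qed
  have "(\<lambda>n. sqrt (\<Sum>k<M. (cmod (P (u (r n)) k - w k))\<^sup>2)) \<longlonglongrightarrow> sqrt (\<Sum>k<M. (cmod (w k - w k))\<^sup>2)"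
    using r(2) by (intro tendsto_real_sqrt tendsto_sum tendsto_power tendsto_norm tendsto_diff) auto
  then have "(\<lambda>n. l2norm (\<lambda>k. P (u (r n)) k - W k)) \<longlonglongrightarrow> 0"
    unfolding e by simp
  then show "\<exists>r w. strict_mono r \<and> w \<in> l2 \<and> (\<lambda>n. l2norm (\<lambda>k. P (u (r n)) k - w k)) \<longlonglongrightarrow> 0"
    using r(1) \<open>W \<in> l2\<close> by blast
qed (fact P)

lemma not_tendsto_0_imp_subseq_ge:
  fixes X :: "nat \<Rightarrow> real"
  assumes "\<not> X \<longlonglongrightarrow> 0" "\<And>n. X n \<ge> 0"
  obtains \<epsilon> s where "\<epsilon> > 0" "strict_mono (s :: nat \<Rightarrow> nat)" "\<And>n. X (s n) \<ge> \<epsilon>"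
proof -
  have "\<forall>\<^sub>F n in sequentially. a < X n" if "a < 0" for a
    by (intro always_eventually allI) (meson less_le_trans assms(2) that)
  with assms(1) have "\<not> (\<forall>e>0. \<forall>\<^sub>F n in sequentially. X n < e)"
    unfolding order_tendsto_iff by blast
  then obtain \<epsilon> where "\<epsilon> > 0" "\<exists>\<^sub>F n in sequentially. \<not> X n < \<epsilon>"
    by (auto simp: not_eventually)
  then have "infinite {n. X n \<ge> \<epsilon>}"
    by (simp add: frequently_cofinite[symmetric] cofinite_eq_sequentially not_less)
  then obtain s :: "nat \<Rightarrow> nat" where "strict_mono s" "\<forall>n. s n \<in> {n. X n \<ge> \<epsilon>}"
    using infinite_enumerate by blast
  then show ?thesis by (intro that[OF \<open>\<epsilon> > 0\<close>]) auto
qed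

lemma compact_op_columns_tendsto_0:
  assumes T: "compact_op T" and col: "\<And>i. \<forall>\<^sub>F j in sequentially. T (unit_vec j) i = 0"
  shows "(\<lambda>j. l2norm (T (unit_vec j))) \<longlonglongrightarrow> 0"
proof (rule ccontr)
  have TI2: "T v \<in> l2" for v using T by (simp add: bounded_op_l2 compact_op_bounded)
  assume "\<not> ?thesis"
  then obtain \<epsilon> s where \<epsilon>: "\<epsilon> > 0"
    and s: "strict_mono (s :: nat \<Rightarrow> nat)" "\<And>n. l2norm (T (unit_vec (s n))) \<ge> \<epsilon>"
    using l2norm_nonneg[OF TI2] by (rule not_tendsto_0_imp_subseq_ge) blast
  obtain r w where r: "strict_mono r" "w \<in> l2"
      "(\<lambda>n. l2norm (\<lambda>k. T (unit_vec (s (r n))) k - w k)) \<longlonglongrightarrow> 0"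
    by (rule compact_opD[OF T, of "\<lambda>n. unit_vec (s n)"]) (auto simp: unit_vec_l2 l2norm_unit_vec)
  \<comment> \<open>The limit \<open>w\<close> vanishes, its coordinates being limits of eventually zero sequences.\<close>
  have "w i = 0" for i
  proof -
    have lim: "(\<lambda>n. T (unit_vec (s (r n))) i - w i) \<longlonglongrightarrow> 0"
      by (rule Lim_null_comparison[OF _ r(3)]) (simp add: cmod_le_l2norm[OF l2_diff[OF TI2 r(2)]])
    have ev: "\<forall>\<^sub>F n in sequentially. T (unit_vec (s (r n))) i - w i = - w i"
      using eventually_subseq[OF strict_mono_o[OF s(1) r(1)] col[of i]] by simp
    have "(\<lambda>n. - w i) \<longlonglongrightarrow> 0" using lim tendsto_cong[OF ev] by simp
    then show ?thesis by (simp add: LIMSEQ_const_iff)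
  qed
  then have "(\<lambda>n. l2norm (T (unit_vec (s (r n))))) \<longlonglongrightarrow> 0" using r(3) by simp
  then have "\<forall>\<^sub>F n in sequentially. l2norm (T (unit_vec (s (r n)))) < \<epsilon>"
    using \<epsilon> by (rule order_tendstoD(2))
  then obtain n where "l2norm (T (unit_vec (s (r n)))) < \<epsilon>"
    by (auto simp: eventually_sequentially)
  moreover have "l2norm (T (unit_vec (s (r n)))) \<ge> \<epsilon>" by (rule s(2))
  ultimately show False by linarith
qed

section \<open>Finite sums of weighted shifts\<close>

text \<open>\<open>wshift n m \<lambda>\<close> is \<open>U\<^sup>n D\<^sub>\<lambda> U\<^sup>*\<^sup>m\<close> with \<open>D\<^sub>\<lambda> E\<^sub>k = \<lambda>\<^sup>k E\<^sub>k\<close>, and \<open>SMono c n m \<lambda>\<close> stands for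
  \<open>c U\<^sup>n D\<^sub>\<lambda> U\<^sup>*\<^sup>m\<close>.\<close>

definition wshift :: "nat \<Rightarrow> nat \<Rightarrow> complex \<Rightarrow> vec \<Rightarrow> vec" where
  "wshift n m l v = (\<lambda>i. if n \<le> i then l ^ (i - n) * v (i - n + m) else 0)"

datatype shift_mono = SMono (sm_coeff: complex) (sm_out: nat) (sm_in: nat) (sm_phase: complex)

fun mono_apply :: "shift_mono \<Rightarrow> vec \<Rightarrow> vec" where
  "mono_apply (SMono c n m l) v = (\<lambda>i. c * wshift n m l v i)"

definition poly_op :: "shift_mono list \<Rightarrow> op" where
  "poly_op cs v = (if v \<in> l2 then (\<lambda>i. \<Sum>t\<leftarrow>cs. mono_apply t v i) else zerovec)"

definition unimodular :: "shift_mono list \<Rightarrow> bool" where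
  "unimodular cs \<longleftrightarrow> (\<forall>t\<in>set cs. cmod (sm_phase t) = 1)"

lemma summable_shifted_le:
  fixes f :: "nat \<Rightarrow> real"
  assumes f: "summable f" "\<And>k. f k \<ge> 0"
  shows "summable (\<lambda>i. if n \<le> i then f (i - n + m) else 0)"
    and "(\<Sum>i. if n \<le> i then f (i - n + m) else 0) \<le> suminf f"
proof -
  define h where "h = (\<lambda>i. if n \<le> i then f (i - n + m) else 0)"
  have hs: "(\<lambda>i. h (i + n)) = (\<lambda>i. f (i + m))" by (auto simp: h_def)
  then have "summable h" using f(1) summable_iff_shift[of h n] by simp
  then show "summable (\<lambda>i. if n \<le> i then f (i - n + m) else 0)" by (simp add: h_def)
  have "suminf h = (\<Sum>i. f (i + m)) + (\<Sum>i<n. h i)"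
    using suminf_split_initial_segment[OF \<open>summable h\<close>, of n] hs by simp
  also have "\<dots> = (\<Sum>i. f (i + m))" by (simp add: h_def)
  also have "\<dots> \<le> suminf f"
    using suminf_split_initial_segment[OF f(1), of m] f(2) by (simp add: sum_nonneg)
  finally show "(\<Sum>i. if n \<le> i then f (i - n + m) else 0) \<le> suminf f" by (simp add: h_def)
qed

lemma wshift_l2:
  assumes v: "v \<in> l2" and l: "cmod l \<le> 1"
  shows "wshift n m l v \<in> l2" and "(\<Sum>i. (cmod (wshift n m l v i))\<^sup>2) \<le> (\<Sum>k. (cmod (v k))\<^sup>2)"
proof -
  define f where "f = (\<lambda>k. (cmod (v k))\<^sup>2)"
  have "summable f" "\<And>k. f k \<ge> 0" using v by (simp_all add: l2_iff f_def)
  note S = summable_shifted_le[OF this, of n m]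
  have le: "(cmod (wshift n m l v i))\<^sup>2 \<le> (if n \<le> i then f (i - n + m) else 0)" for i
  proof (cases "n \<le> i")
    case True
    have "cmod (l ^ (i - n)) \<le> 1" using l by (simp add: norm_power power_le_one)
    then have "cmod (l ^ (i - n) * v (i - n + m)) \<le> cmod (v (i - n + m))"
      by (simp add: norm_mult mult_left_le_one_le)
    then show ?thesis using True by (simp add: wshift_def f_def power_mono)
  qed (simp add: wshift_def)
  have s: "summable (\<lambda>i. (cmod (wshift n m l v i))\<^sup>2)"
    by (rule summable_comparison_test'[OF S(1)]) (use le in auto)
  then show "wshift n m l v \<in> l2" by (simp add: l2_iff)
  show "(\<Sum>i. (cmod (wshift n m l v i))\<^sup>2) \<le> (\<Sum>k. (cmod (v k))\<^sup>2)"
    using order_trans[OF suminf_le[OF le s S(1)] S(2)] by (simp add: f_def)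
qed

lemma mono_apply_l2:
  assumes "v \<in> l2" "cmod (sm_phase t) = 1"
  shows "summable (\<lambda>i. (cmod (mono_apply t v i))\<^sup>2)"
    and "(\<Sum>i. (cmod (mono_apply t v i))\<^sup>2) \<le> (cmod (sm_coeff t))\<^sup>2 * (\<Sum>k. (cmod (v k))\<^sup>2)"
proof -
  obtain c n m l where t: "t = SMono c n m l" by (cases t)
  then have W: "wshift n m l v \<in> l2" "(\<Sum>i. (cmod (wshift n m l v i))\<^sup>2) \<le> (\<Sum>k. (cmod (v k))\<^sup>2)"
    using wshift_l2[OF assms(1)] assms(2) by auto
  have eq: "(\<lambda>i. (cmod (mono_apply t v i))\<^sup>2) = (\<lambda>i. (cmod c)\<^sup>2 * (cmod (wshift n m l v i))\<^sup>2)"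
    by (simp add: t norm_mult power_mult_distrib)
  have s: "summable (\<lambda>i. (cmod (wshift n m l v i))\<^sup>2)" using W(1) by (simp add: l2_iff)
  then show "summable (\<lambda>i. (cmod (mono_apply t v i))\<^sup>2)" unfolding eq by (rule summable_mult)
  show "(\<Sum>i. (cmod (mono_apply t v i))\<^sup>2) \<le> (cmod (sm_coeff t))\<^sup>2 * (\<Sum>k. (cmod (v k))\<^sup>2)"
    unfolding eq using W(2) suminf_mult[OF s, of "(cmod c)\<^sup>2"] by (simp add: t mult_left_mono)
qed

lemma mono_apply_l2_vec: "v \<in> l2 \<Longrightarrow> cmod (sm_phase t) = 1 \<Longrightarrow> mono_apply t v \<in> l2"
  using mono_apply_l2(1) by (simp add: l2_iff)

lemma poly_op_l2:
  assumes u: "unimodular cs" and v: "v \<in> l2"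
  shows "poly_op cs v \<in> l2"
    and "(\<Sum>i. (cmod (poly_op cs v i))\<^sup>2)
           \<le> (real (length cs) * (\<Sum>t\<leftarrow>cs. (cmod (sm_coeff t))\<^sup>2)) * (\<Sum>k. (cmod (v k))\<^sup>2)"
proof -
  have ut: "\<And>t. t \<in> set cs \<Longrightarrow> cmod (sm_phase t) = 1" using u by (simp add: unimodular_def)
  define g where "g = (\<lambda>t i. real (length cs) * (cmod (mono_apply t v i))\<^sup>2)"
  have sg: "\<And>t. t \<in> set cs \<Longrightarrow> summable (g t)"
    unfolding g_def using mono_apply_l2(1)[OF v ut] by (intro summable_mult)
  have le: "(cmod (poly_op cs v i))\<^sup>2 \<le> (\<Sum>t\<leftarrow>cs. g t i)" for i
    using norm_sum_list_squared_le[of "\<lambda>t. mono_apply t v i" cs] v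
    by (simp add: poly_op_def g_def sum_list_const_mult)
  have sw: "summable (\<lambda>i. (cmod (poly_op cs v i))\<^sup>2)"
    by (rule summable_comparison_test'[OF summable_sum_list[OF sg]]) (use le in auto)
  then show "poly_op cs v \<in> l2" by (simp add: l2_iff)
  have "(\<Sum>i. (cmod (poly_op cs v i))\<^sup>2) \<le> (\<Sum>i. \<Sum>t\<leftarrow>cs. g t i)"
    by (rule suminf_le[OF le sw summable_sum_list[OF sg]])
  also have "\<dots> = (\<Sum>t\<leftarrow>cs. \<Sum>i. g t i)" using suminf_sum_list[OF sg] .
  also have "\<dots> \<le> (\<Sum>t\<leftarrow>cs. real (length cs) * ((cmod (sm_coeff t))\<^sup>2 * (\<Sum>k. (cmod (v k))\<^sup>2)))"
  proof (rule sum_list_mono)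
    fix t assume t: "t \<in> set cs"
    show "(\<Sum>i. g t i) \<le> real (length cs) * ((cmod (sm_coeff t))\<^sup>2 * (\<Sum>k. (cmod (v k))\<^sup>2))"
      unfolding g_def suminf_mult[OF mono_apply_l2(1)[OF v ut[OF t]]]
      using mono_apply_l2(2)[OF v ut[OF t]] by (simp add: mult_left_mono)
  qed
  also have "\<dots> = (real (length cs) * (\<Sum>t\<leftarrow>cs. (cmod (sm_coeff t))\<^sup>2)) * (\<Sum>k. (cmod (v k))\<^sup>2)"
    by (simp add: sum_list_const_mult sum_list_mult_const mult.assoc)
  finally show "(\<Sum>i. (cmod (poly_op cs v i))\<^sup>2)
      \<le> (real (length cs) * (\<Sum>t\<leftarrow>cs. (cmod (sm_coeff t))\<^sup>2)) * (\<Sum>k. (cmod (v k))\<^sup>2)" .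
qed

lemma mono_apply_lincomb: "mono_apply t (\<lambda>k. u k + c * v k) i = mono_apply t u i + c * mono_apply t v i"
  by (cases t) (simp add: wshift_def algebra_simps)

lemma bounded_op_poly_op:
  assumes "unimodular cs" shows "bounded_op (poly_op cs)"
  unfolding bounded_op_def
proof (intro conjI ballI allI impI)
  fix u assume "u \<in> l2" then show "poly_op cs u \<in> l2" using poly_op_l2[OF assms] by blast
next
  fix u v c assume uv: "u \<in> l2" "v \<in> l2"
  then show "poly_op cs (\<lambda>k. u k + c * v k) = (\<lambda>k. poly_op cs u k + c * poly_op cs v k)"
    using l2_lincomb(1)[OF uv]
    by (simp add: poly_op_def mono_apply_lincomb sum_list_addf sum_list_const_mult)
next
  define K where "K = real (length cs) * (\<Sum>t\<leftarrow>cs. (cmod (sm_coeff t))\<^sup>2)"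
  have "l2norm (poly_op cs u) \<le> sqrt K * l2norm u" if u: "u \<in> l2" for u
  proof -
    have "l2norm (poly_op cs u) = sqrt (\<Sum>i. (cmod (poly_op cs u i))\<^sup>2)" by (simp add: l2norm_def)
    also have "\<dots> \<le> sqrt (K * (\<Sum>k. (cmod (u k))\<^sup>2))"
      using poly_op_l2(2)[OF assms u] by (simp add: K_def)
    also have "\<dots> = sqrt K * l2norm u" by (simp add: l2norm_def real_sqrt_mult)
    finally show ?thesis .
  qed
  then show "\<exists>C. \<forall>u\<in>l2. l2norm (poly_op cs u) \<le> C * l2norm u" by blast
qed (simp add: poly_op_def)

fun mono_scale :: "complex \<Rightarrow> shift_mono \<Rightarrow> shift_mono" where
  "mono_scale a (SMono c n m l) = SMono (a * c) n m l"

text \<open>The product uses \<open>U\<^sup>*\<^sup>m U\<^sup>p = U\<^sup>p\<^sup>-\<^sup>m\<close> for \<open>m \<le> p\<close>, \<open>U\<^sup>*\<^sup>m U\<^sup>p = U\<^sup>*\<^sup>(\<^sup>m\<^sup>-\<^sup>p\<^sup>)\<close> otherwise,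
  and \<open>D\<^sub>\<lambda> U\<^sup>k = \<lambda>\<^sup>k U\<^sup>k D\<^sub>\<lambda>\<close>.\<close>

fun mono_mult :: "shift_mono \<Rightarrow> shift_mono \<Rightarrow> shift_mono" where
  "mono_mult (SMono c n m l) (SMono d p q \<mu>) =
     (if m \<le> p then SMono (c * d * l ^ (p - m)) (n + p - m) q (l * \<mu>)
      else SMono (c * d * \<mu> ^ (m - p)) n (q + m - p) (l * \<mu>))"

definition poly_mult :: "shift_mono list \<Rightarrow> shift_mono list \<Rightarrow> shift_mono list" where
  "poly_mult xs ys = [mono_mult x y. x \<leftarrow> xs, y \<leftarrow> ys]"

fun mono_adj :: "shift_mono \<Rightarrow> shift_mono" where
  "mono_adj (SMono c n m l) = SMono (cnj c) m n (cnj l)"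

lemma unimodular_append [simp]: "unimodular (xs @ ys) \<longleftrightarrow> unimodular xs \<and> unimodular ys"
  by (auto simp: unimodular_def)

lemma unimodular_scale [simp]: "unimodular (map (mono_scale a) xs) \<longleftrightarrow> unimodular xs"
proof -
  have "sm_phase (mono_scale a t) = sm_phase t" for t by (cases t) simp
  then show ?thesis by (simp add: unimodular_def)
qed

lemma unimodular_mult: "unimodular xs \<Longrightarrow> unimodular ys \<Longrightarrow> unimodular (poly_mult xs ys)"
proof -
  have "sm_phase (mono_mult x y) = sm_phase x * sm_phase y" for x y by (cases x; cases y) simp
  then show "unimodular xs \<Longrightarrow> unimodular ys \<Longrightarrow> unimodular (poly_mult xs ys)"
    by (auto simp: unimodular_def poly_mult_def norm_mult)
qed

lemma sm_phase_mono_adj [simp]: "sm_phase (mono_adj t) = cnj (sm_phase t)"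
  by (cases t) simp

lemma unimodular_adj [simp]: "unimodular (map mono_adj xs) \<longleftrightarrow> unimodular xs"
  by (simp add: unimodular_def)

lemma poly_op_append: "poly_op (xs @ ys) = op_add (poly_op xs) (poly_op ys)"
  by (simp add: poly_op_def op_add_def zerovec_def fun_eq_iff)

lemma poly_op_scale: "poly_op (map (mono_scale a) xs) = op_scale a (poly_op xs)"
proof -
  have "mono_apply (mono_scale a t) v i = a * mono_apply t v i" for t v i by (cases t) simp
  then show ?thesis
    by (simp add: poly_op_def op_scale_def zerovec_def sum_list_const_mult o_def fun_eq_iff)
qed

lemma wshift_wshift:
  "wshift n m l (wshift p q \<mu> v) i =
     (if m \<le> p then l ^ (p - m) * wshift (n + p - m) q (l * \<mu>) v i
      else \<mu> ^ (m - p) * wshift n (q + m - p) (l * \<mu>) v i)"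
proof (cases "m \<le> p")
  case True
  then obtain k where p: "p = m + k" by (metis le_add_diff_inverse)
  show ?thesis
  proof (cases "n + k \<le> i")
    case True
    then obtain r where "i = n + k + r" by (metis le_add_diff_inverse)
    then show ?thesis by (simp add: wshift_def p power_add power_mult_distrib mult_ac)
  qed (use True p in \<open>auto simp: wshift_def\<close>)
next
  case False
  then obtain k where m: "m = p + Suc k" by (metis add_Suc_right less_imp_Suc_add not_le)
  show ?thesis
  proof (cases "n \<le> i")
    case True
    then obtain r where i: "i = n + r" by (metis le_add_diff_inverse)
    have "r + (p + Suc k) - p = r + Suc k" by simp
    then show ?thesis by (simp add: wshift_def m i power_add power_mult_distrib mult_ac add_ac)
  qed (auto simp: wshift_def)
qed

lemma mono_apply_mono_mult:
  "mono_apply x (mono_apply y v) i = mono_apply (mono_mult x y) v i"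
proof -
  obtain c n m l d p q \<mu> where "x = SMono c n m l" "y = SMono d p q \<mu>" by (cases x; cases y)
  moreover have "wshift n m l (\<lambda>k. d * wshift p q \<mu> v k) i = d * wshift n m l (wshift p q \<mu> v) i"
    by (simp add: wshift_def)
  ultimately show ?thesis by (simp add: wshift_wshift)
qed

lemma mono_apply_sum_list:
  "mono_apply x (\<lambda>k. \<Sum>y\<leftarrow>ys. f y k) i = (\<Sum>y\<leftarrow>ys. mono_apply x (f y) i)"
  by (cases x) (simp add: wshift_def sum_list_const_mult)

lemma poly_op_zerovec: "poly_op cs zerovec = zerovec"
proof -
  have "mono_apply t zerovec i = 0" for t i by (cases t) (simp add: wshift_def zerovec_def)
  then show ?thesis by (simp add: poly_op_def fun_eq_iff zerovec_def)
qed

lemma poly_op_mult: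
  assumes "unimodular ys" shows "poly_op (poly_mult xs ys) = op_mult (poly_op xs) (poly_op ys)"
proof
  fix v show "poly_op (poly_mult xs ys) v = op_mult (poly_op xs) (poly_op ys) v"
  proof (cases "v \<in> l2")
    case True
    then have "poly_op ys v \<in> l2" using poly_op_l2[OF assms] by blast
    then show ?thesis
      using True by (simp add: poly_op_def op_mult_def poly_mult_def mono_apply_sum_list
          mono_apply_mono_mult sum_list_map_concat o_def)
  next
    case False
    then have "poly_op ys v = zerovec" "poly_op (poly_mult xs ys) v = zerovec"
      by (simp_all add: poly_op_def)
    then show ?thesis by (simp add: op_mult_def poly_op_zerovec)
  qed
qed

lemma wshift_adjoint:
  assumes u: "u \<in> l2" and v: "v \<in> l2" and l: "cmod l = 1"
  shows "(\<Sum>i. cnj (wshift m n (cnj l) u i) * v i) = (\<Sum>k. cnj (u k) * wshift n m l v k)"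
proof -
  define F where "F = (\<lambda>i. cnj (wshift m n (cnj l) u i) * v i)"
  define G where "G = (\<lambda>k. cnj (u k) * wshift n m l v k)"
  have "summable F" unfolding F_def using l by (intro l2_inner_summable[OF wshift_l2(1)[OF u] v]) auto
  have "summable G" unfolding G_def using l by (intro l2_inner_summable[OF u wshift_l2(1)[OF v]]) auto
  \<comment> \<open>Both series are \<open>\<Sum>\<^sub>j \<lambda>\<^sup>j conj(u (j+n)) v (j+m)\<close> once their zero initial segments are dropped.\<close>
  have "suminf F = (\<Sum>j. F (j + m)) + (\<Sum>i<m. F i)"
    by (rule suminf_split_initial_segment[OF \<open>summable F\<close>])
  also have "\<dots> = (\<Sum>j. l ^ j * cnj (u (j + n)) * v (j + m))"
    by (simp add: F_def wshift_def mult_ac)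
  also have "\<dots> = (\<Sum>j. G (j + n)) + (\<Sum>i<n. G i)"
    by (simp add: G_def wshift_def mult_ac)
  also have "\<dots> = suminf G"
    by (rule suminf_split_initial_segment[OF \<open>summable G\<close>, symmetric])
  finally show ?thesis by (simp add: F_def G_def)
qed

lemma mono_apply_adjoint:
  assumes u: "u \<in> l2" and v: "v \<in> l2" and l: "cmod (sm_phase t) = 1"
  shows "(\<Sum>i. cnj (mono_apply (mono_adj t) u i) * v i) = (\<Sum>k. cnj (u k) * mono_apply t v k)"
proof -
  obtain c n m l where t: "t = SMono c n m l" by (cases t)
  then have l': "cmod l = 1" using l by simp
  have s1: "summable (\<lambda>i. cnj (wshift m n (cnj l) u i) * v i)"
    using l' by (intro l2_inner_summable[OF wshift_l2(1)[OF u] v]) auto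
  have s2: "summable (\<lambda>k. cnj (u k) * wshift n m l v k)"
    using l' by (intro l2_inner_summable[OF u wshift_l2(1)[OF v]]) auto
  have "(\<Sum>i. cnj (mono_apply (mono_adj t) u i) * v i) = (\<Sum>i. c * (cnj (wshift m n (cnj l) u i) * v i))"
    by (simp add: t mult_ac)
  also have "\<dots> = c * (\<Sum>k. cnj (u k) * wshift n m l v k)"
    using suminf_mult[OF s1] wshift_adjoint[OF u v l'] by simp
  also have "\<dots> = (\<Sum>k. cnj (u k) * mono_apply t v k)"
    using suminf_mult[OF s2] by (simp add: t mult_ac)
  finally show ?thesis .
qed

lemma poly_op_inner:
  assumes uc: "unimodular xs" and u: "u \<in> l2" and v: "v \<in> l2"
  shows "l2inner (poly_op (map mono_adj xs) u) v = l2inner u (poly_op xs v)"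
proof -
  have ut: "\<And>t. t \<in> set xs \<Longrightarrow> cmod (sm_phase t) = 1" using uc by (simp add: unimodular_def)
  have "\<And>t. t \<in> set xs \<Longrightarrow> cmod (sm_phase (mono_adj t)) = 1"
    using uc by (simp add: unimodular_def)
  then have sa: "\<And>t. t \<in> set xs \<Longrightarrow> summable (\<lambda>i. cnj (mono_apply (mono_adj t) u i) * v i)"
    by (rule l2_inner_summable[OF mono_apply_l2_vec[OF u] v])
  have sb: "\<And>t. t \<in> set xs \<Longrightarrow> summable (\<lambda>k. cnj (u k) * mono_apply t v k)"
    by (rule l2_inner_summable[OF u mono_apply_l2_vec[OF v ut]])
  have "l2inner (poly_op (map mono_adj xs) u) v = (\<Sum>i. \<Sum>t\<leftarrow>xs. cnj (mono_apply (mono_adj t) u i) * v i)"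
    using u by (simp add: l2inner_def poly_op_def sum_list_map_eq_sum_nth sum_distrib_right)
  also have "\<dots> = (\<Sum>t\<leftarrow>xs. \<Sum>i. cnj (mono_apply (mono_adj t) u i) * v i)"
    by (rule suminf_sum_list[OF sa])
  also have "\<dots> = (\<Sum>t\<leftarrow>xs. \<Sum>k. cnj (u k) * mono_apply t v k)"
    using mono_apply_adjoint[OF u v ut] by (simp cong: map_cong)
  also have "\<dots> = (\<Sum>k. \<Sum>t\<leftarrow>xs. cnj (u k) * mono_apply t v k)"
    by (rule suminf_sum_list[OF sb, symmetric])
  also have "\<dots> = l2inner u (poly_op xs v)"
    using v by (simp add: l2inner_def poly_op_def sum_list_const_mult)
  finally show ?thesis .
qed

lemma poly_op_adjoint:
  assumes "unimodular xs" shows "adjoint (poly_op xs) = poly_op (map mono_adj xs)"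
  unfolding adjoint_def
proof (rule the_equality)
  show "bounded_op (poly_op (map mono_adj xs)) \<and>
      (\<forall>u\<in>l2. \<forall>v\<in>l2. l2inner (poly_op (map mono_adj xs) u) v = l2inner u (poly_op xs v))"
    using assms by (simp add: bounded_op_poly_op poly_op_inner)
next
  fix S assume "bounded_op S \<and> (\<forall>u\<in>l2. \<forall>v\<in>l2. l2inner (S u) v = l2inner u (poly_op xs v))"
  then show "S = poly_op (map mono_adj xs)"
    using assms by (intro bounded_op_eqI) (simp_all add: bounded_op_poly_op poly_op_inner)
qed

section \<open>The generated *-algebra\<close>

lemma shift_eq_poly_op: "shift = poly_op [SMono 1 1 0 1]"
  by (auto simp: shift_def poly_op_def wshift_def fun_eq_iff)

lemma adjoint_shift_eq_poly_op: "adjoint shift = poly_op [SMono 1 0 1 1]"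
  using poly_op_adjoint[of "[SMono 1 1 0 1]"] by (simp add: shift_eq_poly_op unimodular_def)

lemma character_natmul:
  assumes "character chi" shows "chi (natmul k x) = chi x ^ k"
proof (induction k)
  case 0
  have "chi 0 = chi 0 * chi 0" "chi 0 \<noteq> 0"
    using assms unfolding character_def by (metis add_0, metis norm_zero zero_neq_one)
  then show ?case by (simp add: natmul_def)
next
  case (Suc k)
  then show ?case using assms unfolding character_def by (simp add: natmul_def)
qed

lemma mult_op_character_eq_poly_op:
  "character chi \<Longrightarrow> mult_op chi (\<lambda>n. natmul n x) = poly_op [SMono 1 0 0 (chi x)]"
  by (auto simp: mult_op_def poly_op_def wshift_def fun_eq_iff character_natmul)

lemma alg_calA_poly_op:
  assumes "T \<in> alg_calA x1"
  shows "\<exists>cs. unimodular cs \<and> T = poly_op cs"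
  using assms unfolding alg_calA_def
proof (induction rule: star_alg_gen.induct)
  case (gen T)
  then consider "T = shift" | "T = adjoint shift"
    | chi where "character chi" "T = mult_op chi (\<lambda>n. natmul n x1)"
    by blast
  then show ?case
  proof cases
    case 1
    then show ?thesis
      by (intro exI[of _ "[SMono 1 1 0 1]"]) (simp add: shift_eq_poly_op unimodular_def)
  next
    case 2
    then show ?thesis
      by (intro exI[of _ "[SMono 1 0 1 1]"]) (simp add: adjoint_shift_eq_poly_op unimodular_def)
  next
    case 3
    then show ?thesis
      by (intro exI[of _ "[SMono 1 0 0 (chi x1)]"])
        (simp add: mult_op_character_eq_poly_op unimodular_def character_def)
  qed
next
  case (add T T')
  then show ?case by (metis poly_op_append unimodular_append)
next
  case (scale T c)
  then show ?case by (metis poly_op_scale unimodular_scale)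
next
  case (mult T T')
  then show ?case by (metis poly_op_mult unimodular_mult)
next
  case (adj T)
  then show ?case by (metis poly_op_adjoint unimodular_adj)
qed

lemma poly_op_pure_shift_in_alg_calA: "poly_op [SMono 1 n m 1] \<in> alg_calA x1"
proof -
  have S: "poly_op [SMono 1 1 0 1] \<in> alg_calA x1" "poly_op [SMono 1 0 1 1] \<in> alg_calA x1"
    unfolding shift_eq_poly_op[symmetric] adjoint_shift_eq_poly_op[symmetric]
    by (auto simp: alg_calA_def intro: star_alg_gen.gen)
  have "poly_op [SMono 1 0 m 1] \<in> alg_calA x1"
  proof (induction m)
    case 0
    have "poly_op [SMono 1 0 0 1] = op_mult (poly_op [SMono 1 0 1 1]) (poly_op [SMono 1 1 0 1])"
      using poly_op_mult[of "[SMono 1 1 0 1]" "[SMono 1 0 1 1]"]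
      by (simp add: unimodular_def poly_mult_def)
    then show ?case using S by (simp add: alg_calA_def star_alg_gen.mult)
  next
    case (Suc m)
    have "poly_op [SMono 1 0 (Suc m) 1] = op_mult (poly_op [SMono 1 0 m 1]) (poly_op [SMono 1 0 1 1])"
      using poly_op_mult[of "[SMono 1 0 1 1]" "[SMono 1 0 m 1]"]
      by (cases "m = 0") (simp_all add: unimodular_def poly_mult_def)
    then show ?case using S Suc by (simp add: alg_calA_def star_alg_gen.mult)
  qed
  then show ?thesis
  proof (induction n)
    case (Suc n)
    have "poly_op [SMono 1 (Suc n) m 1] = op_mult (poly_op [SMono 1 1 0 1]) (poly_op [SMono 1 n m 1])"
      using poly_op_mult[of "[SMono 1 n m 1]" "[SMono 1 1 0 1]"]
      by (simp add: unimodular_def poly_mult_def)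
    then show ?case using S Suc by (simp add: alg_calA_def star_alg_gen.mult)
  qed
qed

text \<open>\<open>coord_proj M = U\<^sup>*U - U\<^sup>M U\<^sup>*\<^sup>M\<close> is the orthogonal projection onto the span of
  \<open>E\<^sub>0, \<dots>, E\<^sub>M\<^sub>-\<^sub>1\<close>; \<open>U\<^sup>*U\<close> rather than the identity, which does not vanish off \<open>l2\<close>.\<close>

definition coord_proj :: "nat \<Rightarrow> op" where
  "coord_proj M = poly_op [SMono 1 0 0 1, SMono (-1) M M 1]"

lemma coord_proj_apply: "v \<in> l2 \<Longrightarrow> coord_proj M v = (\<lambda>i. if i < M then v i else 0)"
  by (auto simp: coord_proj_def poly_op_def wshift_def fun_eq_iff)

lemma bounded_op_coord_proj: "bounded_op (coord_proj M)"
  unfolding coord_proj_def by (rule bounded_op_poly_op) (simp add: unimodular_def)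

lemma coord_proj_in_alg_calA: "coord_proj M \<in> alg_calA x1"
proof -
  have "coord_proj M = op_add (poly_op [SMono 1 0 0 1]) (op_scale (-1) (poly_op [SMono 1 M M 1]))"
    using poly_op_append[of "[SMono 1 0 0 1]" "[SMono (-1) M M 1]"]
      poly_op_scale[of "-1" "[SMono 1 M M 1]"]
    by (simp add: coord_proj_def)
  then show ?thesis
    using poly_op_pure_shift_in_alg_calA[of 0 0 x1] poly_op_pure_shift_in_alg_calA[of M M x1]
    by (simp add: alg_calA_def star_alg_gen.add star_alg_gen.scale)
qed

lemma compact_op_coord_proj_mult:
  assumes "bounded_op S" shows "compact_op (op_mult (coord_proj M) S)"
proof (rule compact_op_if_rows_vanish)
  show "bounded_op (op_mult (coord_proj M) S)"
    using assms by (simp add: bounded_op_mult bounded_op_coord_proj)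
  show "op_mult (coord_proj M) S v k = 0" if "k \<ge> M" for v k
    using that by (simp add: op_mult_def coord_proj_apply bounded_op_l2[OF assms])
qed

lemma coord_proj_mult_eq:
  assumes "bounded_op T" "\<And>v i. v \<in> l2 \<Longrightarrow> i \<ge> M \<Longrightarrow> T v i = 0"
  shows "op_mult (coord_proj M) T = T"
proof
  fix v show "op_mult (coord_proj M) T v = T v"
    using assms bounded_op_l2[OF assms(1)] bounded_op_outside[OF assms(1)]
    by (cases "v \<in> l2") (auto simp: op_mult_def coord_proj_apply fun_eq_iff zerovec_def
        bounded_op_zerovec[OF bounded_op_coord_proj])
qed

section \<open>Compact finite sums of weighted shifts\<close>

lemma mono_apply_eq:
  "mono_apply t v i =
     (if sm_out t \<le> i then sm_coeff t * sm_phase t ^ (i - sm_out t) * v (i - sm_out t + sm_in t)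
      else 0)"
  by (cases t) (simp add: wshift_def)

definition degree_bound :: "shift_mono list \<Rightarrow> nat" where
  "degree_bound cs = Suc (\<Sum>t\<leftarrow>cs. sm_out t + sm_in t)"

lemma degree_bound: "t \<in> set cs \<Longrightarrow> sm_out t < degree_bound cs \<and> sm_in t < degree_bound cs"
  using member_le_sum_list[of "sm_out t + sm_in t" "map (\<lambda>t. sm_out t + sm_in t) cs"]
  by (auto simp: degree_bound_def)

lemma poly_op_unit_vec_far:
  assumes "j > i + degree_bound cs"
  shows "poly_op cs (unit_vec j) i = 0"
proof -
  have "mono_apply t (unit_vec j) i = 0" if "t \<in> set cs" for t
    using degree_bound[OF that] assms by (auto simp: mono_apply_eq unit_vec_def)
  then show ?thesis by (simp add: poly_op_def unit_vec_l2 sum_list_map_eq_sum_nth)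
qed

lemma poly_op_diagonal_power_sum:
  fixes cs :: "shift_mono list" and p q :: nat
  defines "N \<equiv> degree_bound cs"
  obtains b where
    "\<And>k. poly_op cs (unit_vec (k + N + q)) (k + N + p) = (\<Sum>t\<leftarrow>cs. b t * sm_phase t ^ k)"
proof
  fix k
  define b where "b = (\<lambda>t. if p + sm_in t = q + sm_out t
      then sm_coeff t * sm_phase t ^ (N + p - sm_out t) else 0)"
  have "mono_apply t (unit_vec (k + N + q)) (k + N + p) = b t * sm_phase t ^ k" if "t \<in> set cs" for t
  proof -
    define r where "r = N + p - sm_out t"
    have "sm_out t < N" using degree_bound[OF that] by (simp add: N_def)
    then have r: "k + N + p = sm_out t + (k + r)" by (simp add: r_def)
    have "(k + r + sm_in t = k + N + q) \<longleftrightarrow> (p + sm_in t = q + sm_out t)"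
      using r by arith
    then show ?thesis
      unfolding r by (simp add: mono_apply_eq unit_vec_def b_def power_add mult_ac flip: r_def)
  qed
  then show "poly_op cs (unit_vec (k + N + q)) (k + N + p) = (\<Sum>t\<leftarrow>cs. b t * sm_phase t ^ k)"
    by (simp add: poly_op_def unit_vec_l2 cong: map_cong)
qed

lemma compact_poly_op_entries_vanish:
  assumes uc: "unimodular cs" and cp: "compact_op (poly_op cs)"
    and "degree_bound cs \<le> i" "degree_bound cs \<le> j"
  shows "poly_op cs (unit_vec j) i = 0"
proof -
  define N where "N = degree_bound cs"
  have col: "(\<lambda>j. l2norm (poly_op cs (unit_vec j))) \<longlonglongrightarrow> 0"
  proof (rule compact_op_columns_tendsto_0[OF cp])
    show "\<forall>\<^sub>F j in sequentially. poly_op cs (unit_vec j) i = 0" for i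
      by (rule eventually_mono[OF eventually_gt_at_top[of "i + degree_bound cs"]])
        (rule poly_op_unit_vec_far)
  qed
  have diag: "poly_op cs (unit_vec (k + N + q)) (k + N + p) = 0" for k p q
  proof -
    obtain b where b: "\<And>k. poly_op cs (unit_vec (k + N + q)) (k + N + p) = (\<Sum>t\<leftarrow>cs. b t * sm_phase t ^ k)"
      using poly_op_diagonal_power_sum unfolding N_def by blast
    have "(\<lambda>k. \<Sum>t\<leftarrow>cs. b t * sm_phase t ^ k) \<longlonglongrightarrow> 0"
    proof (rule Lim_null_comparison)
      show "\<forall>\<^sub>F k in sequentially. norm (\<Sum>t\<leftarrow>cs. b t * sm_phase t ^ k)
          \<le> l2norm (poly_op cs (unit_vec (k + (N + q))))"
        using cmod_le_l2norm[OF poly_op_l2(1)[OF uc unit_vec_l2]] by (simp add: b[symmetric] add.assoc)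
      show "(\<lambda>k. l2norm (poly_op cs (unit_vec (k + (N + q))))) \<longlonglongrightarrow> 0"
        using LIMSEQ_ignore_initial_segment[OF col] by simp
    qed
    with uc show ?thesis
      unfolding b by (intro unimodular_power_sum_list_tendsto_0_imp_0) (auto simp: unimodular_def)
  qed
  show ?thesis
  proof (cases "j \<le> i")
    case True
    then show ?thesis using diag[where k = "j - N" and p = "i - j" and q = 0] assms(3,4) by (simp add: N_def)
  next
    case False
    then show ?thesis using diag[where k = "i - N" and p = 0 and q = "j - i"] assms(3,4) by (simp add: N_def)
  qed
qed

lemma poly_op_row_expansion:
  assumes v: "v \<in> l2" and out: "\<And>t. t \<in> set cs \<Longrightarrow> sm_out t \<le> i"
  shows "poly_op cs v i =
    (\<Sum>y\<in>(\<lambda>t. i - sm_out t + sm_in t) ` set cs. poly_op cs (unit_vec y) i * v y)"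
proof -
  define I where "I = {..<length cs}"
  define g where "g = (\<lambda>k. i - sm_out (cs ! k) + sm_in (cs ! k))"
  define a where "a = (\<lambda>k. sm_coeff (cs ! k) * sm_phase (cs ! k) ^ (i - sm_out (cs ! k)))"
  have app: "mono_apply (cs ! k) w i = a k * w (g k)" if "k \<in> I" for k w
    using out[of "cs ! k"] that by (simp add: mono_apply_eq a_def g_def I_def)
  have img: "(\<lambda>t. i - sm_out t + sm_in t) ` set cs = g ` I"
    unfolding set_conv_nth g_def I_def by blast
  have "(\<Sum>y\<in>g ` I. poly_op cs (unit_vec y) i * v y)
          = (\<Sum>y\<in>g ` I. \<Sum>k\<in>I. if g k = y then a k * v y else 0)"
    by (simp add: poly_op_def unit_vec_l2 sum_list_map_eq_sum_nth flip: I_def)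
      (auto simp: app unit_vec_def sum_distrib_right intro!: sum.cong)
  also have "\<dots> = (\<Sum>k\<in>I. a k * v (g k))"
    by (subst sum.swap) (simp add: I_def)
  also have "\<dots> = poly_op cs v i"
    using v by (simp add: poly_op_def sum_list_map_eq_sum_nth app flip: I_def)
  finally show ?thesis by (simp add: img)
qed

lemma compact_poly_op_rows_vanish:
  assumes uc: "unimodular cs" and cp: "compact_op (poly_op cs)"
    and v: "v \<in> l2" and i: "2 * degree_bound cs \<le> i"
  shows "poly_op cs v i = 0"
proof -
  have out: "sm_out t \<le> i" "degree_bound cs \<le> i - sm_out t + sm_in t" if "t \<in> set cs" for t
    using degree_bound[OF that] i by auto
  have "poly_op cs (unit_vec y) i = 0" if "y \<in> (\<lambda>t. i - sm_out t + sm_in t) ` set cs" for y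
    using that out i by (auto intro!: compact_poly_op_entries_vanish[OF uc cp])
  then show ?thesis by (simp add: poly_op_row_expansion[OF v out(1)])
qed

theorem proposition4p1:
  fixes x1 :: "'g::{topological_ab_group_add, t2_space}"
    and d :: "op \<Rightarrow> op"
  assumes "compact (UNIV :: 'g set)"
    and "infinite (UNIV :: 'g set)"
    and "closure (range (\<lambda>k::int. intmul k x1)) = UNIV"
    and "is_derivation (alg_calA x1) (alg_A x1) d"
  shows "d ` (alg_calA x1 \<inter> compact_ops) \<subseteq> compact_ops"
proof
  fix y assume "y \<in> d ` (alg_calA x1 \<inter> compact_ops)"
  then obtain T where T: "T \<in> alg_calA x1" "compact_op T" and y: "y = d T"
    by (auto simp: compact_ops_def)
  obtain cs where cs: "unimodular cs" "T = poly_op cs" using alg_calA_poly_op[OF T(1)] by blast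
  define P where "P = coord_proj (2 * degree_bound cs)"
  have P: "P \<in> alg_calA x1" by (simp add: P_def coord_proj_in_alg_calA)
  have "op_mult P T = T"
    unfolding P_def using T(2) cs compact_poly_op_rows_vanish
    by (intro coord_proj_mult_eq) (auto simp: compact_op_bounded)
  then have dT: "d T = op_add (op_mult P (d T)) (op_mult (d P) T)"
    using assms(4) P T(1) unfolding is_derivation_def by metis
  have dA: "bounded_op (d a)" if "a \<in> alg_calA x1" for a
    using assms(4) that unfolding is_derivation_def alg_A_def cstar_gen_def by blast
  have "compact_op (op_mult P (d T))"
    unfolding P_def by (rule compact_op_coord_proj_mult[OF dA[OF T(1)]])
  moreover have "compact_op (op_mult (d P) T)"
    by (rule compact_op_mult_left[OF dA[OF P] T(2)])
  ultimately have "compact_op (d T)" by (subst dT) (rule compact_op_add)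
  then show "y \<in> compact_ops" by (simp add: y compact_ops_def)
qed

end
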